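(* Let $(\alpha_s)$, $(\sigma_s)$ be positive coefficients with $\alpha_s^2+\sigma_s^2=1$. Fix reverse times $t+\Delta t$, $t$, $t-\Delta t$, a vector $\boldsymbol{\epsilon}\in\mathbb{R}^n$ (the noise prediction $\bm{\epsilon}_\Theta(\boldsymbol{x}_t,t)$, treated as deterministic), and a real number $\beta_t>0$. Let $\mu_t,\mu_{t+\Delta t}\in\mathbb{R}^n$ be deterministic vectors and let $\eta_t,\eta_{t+\Delta t}$ be random vectors in $\mathbb{R}^n$ with $\mathbb{E}[\eta_t]=\mathbb{E}[\eta_{t+\Delta t}]=0$, $\mathrm{Var}(\eta_t)=\mathrm{Var}(\eta_{t+\Delta t})=\Sigma_t$ and $\mathrm{Cov}(\eta_t,\eta_{t+\Delta t})=\rho_t\Sigma_t$ for some $0\le\rho_t<1$. Set $\boldsymbol{D}_t=\mu_t+\eta_t$, $\boldsymbol{D}_{t+\Delta t}=\mu_{t+\Delta t}+\eta_{t+\Delta t}$, $\widetilde{\boldsymbol{D}}_t=(1-\beta_t)\boldsymbol{D}_t+\beta_t\boldsymbol{D}_{t+\Delta t}$, $r_t:=\mu_{t+\Delta t}-\mu_t$, and $$\boldsymbol{x}^{\mathrm{PS}}_{t-\Delta t}=\alpha_{t-\Delta t}\boldsymbol{D}_t+\sigma_{t-\Delta t}\boldsymbol{\epsilon},\quad \boldsymbol{x}^{\mathrm{LAMP}}_{t-\Delta t}=\alpha_{t-\Delta t}\widetilde{\boldsymbol{D}}_t+\sigma_{t-\Delta t}\boldsymbol{\epsilon},\quad \boldsymbol{x}^{\mu}_{t-\Delta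 t}=\alpha_{t-\Delta t}\mu_t+\sigma_{t-\Delta t}\boldsymbol{\epsilon}.$$ Then $$\mathbb{E}\|\boldsymbol{x}^{\mathrm{PS}}_{t-\Delta t}-\boldsymbol{x}^{\mu}_{t-\Delta t}\|^2=\alpha_{t-\Delta t}^2\,\mathrm{tr}(\Sigma_t),$$ $$\mathbb{E}\|\boldsymbol{x}^{\mathrm{LAMP}}_{t-\Delta t}-\boldsymbol{x}^{\mu}_{t-\Delta t}\|^2=\alpha_{t-\Delta t}^2\Big[\big(1-2\beta_t(1-\beta_t)(1-\rho_t)\big)\mathrm{tr}(\Sigma_t)+\beta_t^2\|r_t\|^2\Big].$$ Consequently, $\mathbb{E}\|\boldsymbol{x}^{\mathrm{LAMP}}_{t-\Delta t}-\boldsymbol{x}^{\mu}_{t-\Delta t}\|^2<\mathbb{E}\|\boldsymbol{x}^{\mathrm{PS}}_{t-\Delta t}-\boldsymbol{x}^{\mu}_{t-\Delta t}\|^2$ whenever $$\beta_t\|r_t\|^2<2(1-\beta_t)(1-\rho_t)\,\mathrm{tr}(\Sigma_t).$$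
   Context: $\boldsymbol{D}_t,\boldsymbol{D}_{t+\Delta t}$ model data-consistent estimates in a diffusion posterior sampler as local targets $\mu$ plus zero-mean estimation errors $\eta$; $\boldsymbol{x}^{\mu}_{t-\Delta t}$ is the ideal one-step state. $\mathrm{Var}$ denotes the covariance matrix and $\mathrm{Cov}(\eta_t,\eta_{t+\Delta t})=\mathbb{E}[\eta_t\eta_{t+\Delta t}^\top]$; $\|\cdot\|$ is the Euclidean norm. *)

theory Defs
  imports "HOL-Probability.Probability"
begin

definition cov_matrix :: "'a measure \<Rightarrow> ('a \<Rightarrow> real^'n) \<Rightarrow> real^'n^'n" where
  "cov_matrix M X = (\<chi> i j. (\<integral>\<omega>. X \<omega> $ i * X \<omega> $ j \<partial>M)
                               - (\<integral>\<omega>. X \<omega> $ i \<partial>M) * (\<integral>\<omega>. X \<omega> $ j \<partial>M))"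

definition cross_cov :: "'a measure \<Rightarrow> ('a \<Rightarrow> real^'n) \<Rightarrow> ('a \<Rightarrow> real^'n) \<Rightarrow> real^'n^'n" where
  "cross_cov M X Y = (\<chi> i j. \<integral>\<omega>. X \<omega> $ i * Y \<omega> $ j \<partial>M)"

end

theory Submission
  imports Defs
begin

text \<open>Both errors are second moments of affine combinations \<open>c + p \<eta>\<^sub>t + q \<eta>\<^sub>s\<close> of the
  centred noises. Expanding the squared norm coordinatewise, the terms linear in the noise vanish
  because the means are zero, leaving \<open>\<parallel>c\<parallel>\<^sup>2 + p\<^sup>2 tr Var \<eta>\<^sub>t + q\<^sup>2 tr Var \<eta>\<^sub>s + 2pq tr Cov(\<eta>\<^sub>t,\<eta>\<^sub>s)\<close>.
  The PS error is the case \<open>c = 0, p = \<alpha>, q = 0\<close>; the LAMP error is \<open>c = \<alpha>\<beta> r,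
  p = \<alpha>(1 - \<beta>), q = \<alpha>\<beta>\<close>, where equal variances and correlation \<open>\<rho>\<close> combine to
  \<open>(1 - \<beta>)\<^sup>2 + \<beta>\<^sup>2 + 2\<beta>(1 - \<beta>)\<rho> = 1 - 2\<beta>(1 - \<beta>)(1 - \<rho>)\<close>.\<close>

lemma borel_measurable_vec_nth [measurable (raw)]:
  fixes X :: "'a \<Rightarrow> 'b::real_normed_vector^'n"
  assumes "X \<in> borel_measurable M"
  shows "(\<lambda>\<omega>. X \<omega> $ i) \<in> borel_measurable M"
  using assms borel_measurable_continuous_onI[OF linear_continuous_on[OF bounded_linear_vec_nth]]
  by (rule measurable_compose)

lemma integrable_vec_nthI:
  fixes X :: "'a \<Rightarrow> real^'n"
  assumes "X \<in> borel_measurable M" and "\<And>i. integrable M (\<lambda>\<omega>. X \<omega> $ i)"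
  shows "integrable M X"
proof (rule Bochner_Integration.integrable_bound)
  show "integrable M (\<lambda>\<omega>. \<Sum>i\<in>UNIV. \<bar>X \<omega> $ i\<bar>)"
    using assms(2) by auto
  show "AE \<omega> in M. norm (X \<omega>) \<le> norm (\<Sum>i\<in>UNIV. \<bar>X \<omega> $ i\<bar>)"
    using norm_le_l1_cart by (auto simp: sum_nonneg)
qed fact

lemma integral_vec_nth:
  fixes X :: "'a \<Rightarrow> real^'n"
  assumes "integrable M X"
  shows "(\<integral>\<omega>. X \<omega> \<partial>M) $ i = (\<integral>\<omega>. X \<omega> $ i \<partial>M)"
  using integral_bounded_linear[OF bounded_linear_vec_nth assms] by simp

lemma integrable_mult_of_square_integrable:
  fixes f g :: "'a \<Rightarrow> real"
  assumes [measurable]: "f \<in> borel_measurable M" "g \<in> borel_measurable M"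
    and "integrable M (\<lambda>\<omega>. (f \<omega>)\<^sup>2)" "integrable M (\<lambda>\<omega>. (g \<omega>)\<^sup>2)"
  shows "integrable M (\<lambda>\<omega>. f \<omega> * g \<omega>)"
proof (rule Bochner_Integration.integrable_bound)
  show "integrable M (\<lambda>\<omega>. (f \<omega>)\<^sup>2 + (g \<omega>)\<^sup>2)"
    using assms(3,4) by simp
  have "\<bar>f \<omega> * g \<omega>\<bar> \<le> (f \<omega>)\<^sup>2 + (g \<omega>)\<^sup>2" for \<omega>
  proof -
    have "2 * \<bar>f \<omega> * g \<omega>\<bar> \<le> (f \<omega>)\<^sup>2 + (g \<omega>)\<^sup>2"
      using sum_squares_bound[of "\<bar>f \<omega>\<bar>" "\<bar>g \<omega>\<bar>"] by (simp add: abs_mult)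
    then show ?thesis by simp
  qed
  then show "AE \<omega> in M. norm (f \<omega> * g \<omega>) \<le> norm ((f \<omega>)\<^sup>2 + (g \<omega>)\<^sup>2)"
    by simp
qed measurable

lemma trace_scaleR: "trace (c *\<^sub>R A) = c * trace (A :: real^'n^'n)"
  by (simp add: trace_def sum_distrib_left)

context prob_space
begin

lemma expectation_affine_square:
  fixes f g :: "'a \<Rightarrow> real"
  assumes [measurable]: "f \<in> borel_measurable M" "g \<in> borel_measurable M"
    and sq: "integrable M (\<lambda>\<omega>. (f \<omega>)\<^sup>2)" "integrable M (\<lambda>\<omega>. (g \<omega>)\<^sup>2)"
    and mean: "expectation f = 0" "expectation g = 0"
  shows "integrable M (\<lambda>\<omega>. (c + p * f \<omega> + q * g \<omega>)\<^sup>2)"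
    and "expectation (\<lambda>\<omega>. (c + p * f \<omega> + q * g \<omega>)\<^sup>2)
      = c\<^sup>2 + p\<^sup>2 * expectation (\<lambda>\<omega>. (f \<omega>)\<^sup>2) + q\<^sup>2 * expectation (\<lambda>\<omega>. (g \<omega>)\<^sup>2)
        + 2 * p * q * expectation (\<lambda>\<omega>. f \<omega> * g \<omega>)"
proof -
  have expand: "(c + p * f \<omega> + q * g \<omega>)\<^sup>2 = c\<^sup>2 + (2 * p * c) * f \<omega> + (2 * q * c) * g \<omega>
      + p\<^sup>2 * (f \<omega>)\<^sup>2 + q\<^sup>2 * (g \<omega>)\<^sup>2 + (2 * p * q) * (f \<omega> * g \<omega>)" for \<omega>
    by (simp add: power2_eq_square algebra_simps)
  have "integrable M f" "integrable M g"
    using sq by (simp_all add: square_integrable_imp_integrable)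
  moreover have "integrable M (\<lambda>\<omega>. f \<omega> * g \<omega>)"
    using sq by (simp add: integrable_mult_of_square_integrable)
  ultimately show "integrable M (\<lambda>\<omega>. (c + p * f \<omega> + q * g \<omega>)\<^sup>2)"
    and "expectation (\<lambda>\<omega>. (c + p * f \<omega> + q * g \<omega>)\<^sup>2)
      = c\<^sup>2 + p\<^sup>2 * expectation (\<lambda>\<omega>. (f \<omega>)\<^sup>2) + q\<^sup>2 * expectation (\<lambda>\<omega>. (g \<omega>)\<^sup>2)
        + 2 * p * q * expectation (\<lambda>\<omega>. f \<omega> * g \<omega>)"
    unfolding expand using sq mean by (simp_all add: prob_space)
qed

lemma expectation_norm_affine_square:
  fixes X Y :: "'a \<Rightarrow> real^'n"
  assumes [measurable]: "X \<in> borel_measurable M" "Y \<in> borel_measurable M"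
    and sq: "\<And>i. integrable M (\<lambda>\<omega>. (X \<omega> $ i)\<^sup>2)" "\<And>i. integrable M (\<lambda>\<omega>. (Y \<omega> $ i)\<^sup>2)"
    and mean: "expectation X = 0" "expectation Y = 0"
  shows "expectation (\<lambda>\<omega>. (norm (c + p *\<^sub>R X \<omega> + q *\<^sub>R Y \<omega>))\<^sup>2)
    = (norm c)\<^sup>2 + p\<^sup>2 * trace (cov_matrix M X) + q\<^sup>2 * trace (cov_matrix M Y)
      + 2 * p * q * trace (cross_cov M X Y)"
proof -
  have "integrable M (\<lambda>\<omega>. X \<omega> $ i)" "integrable M (\<lambda>\<omega>. Y \<omega> $ i)" for i
    using sq by (simp_all add: square_integrable_imp_integrable)
  then have mean_nth: "expectation (\<lambda>\<omega>. X \<omega> $ i) = 0" "expectation (\<lambda>\<omega>. Y \<omega> $ i) = 0" for i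
    using mean integral_vec_nth[of M X i] integral_vec_nth[of M Y i]
    by (simp_all add: integrable_vec_nthI)
  have "(norm (c + p *\<^sub>R X \<omega> + q *\<^sub>R Y \<omega>))\<^sup>2
      = (\<Sum>i\<in>UNIV. (c $ i + p * X \<omega> $ i + q * Y \<omega> $ i)\<^sup>2)" for \<omega>
    unfolding power2_norm_eq_inner inner_vec_def by (simp add: power2_eq_square)
  then have "expectation (\<lambda>\<omega>. (norm (c + p *\<^sub>R X \<omega> + q *\<^sub>R Y \<omega>))\<^sup>2)
      = (\<Sum>i\<in>UNIV. expectation (\<lambda>\<omega>. (c $ i + p * X \<omega> $ i + q * Y \<omega> $ i)\<^sup>2))"
    using sq mean_nth by (simp add: expectation_affine_square(1))
  also have "\<dots> = (\<Sum>i\<in>UNIV. (c $ i)\<^sup>2 + p\<^sup>2 * cov_matrix M X $ i $ i + q\<^sup>2 * cov_matrix M Y $ i $ i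
      + 2 * p * q * cross_cov M X Y $ i $ i)"
    using sq mean_nth
    by (simp add: expectation_affine_square(2)) (simp add: cov_matrix_def cross_cov_def power2_eq_square)
  also have "\<dots> = (norm c)\<^sup>2 + p\<^sup>2 * trace (cov_matrix M X) + q\<^sup>2 * trace (cov_matrix M Y)
      + 2 * p * q * trace (cross_cov M X Y)"
    by (simp add: norm_vec_def L2_set_def sum_nonneg trace_def sum.distrib sum_distrib_left)
  finally show ?thesis .
qed

end

theorem proposition2:
  fixes M :: "'a measure"
    and alpha sigma :: "real \<Rightarrow> real"
    and t \<Delta>t \<beta> \<rho> :: real
    and \<epsilon> \<mu>t \<mu>s :: "real^'n"
    and \<eta>t \<eta>s :: "'a \<Rightarrow> real^'n"
    and \<Sigma> :: "real^'n^'n"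
  assumes "prob_space M"
    and coef_pos: "\<And>s. alpha s > 0" "\<And>s. sigma s > 0"
    and coef_norm: "\<And>s. (alpha s)\<^sup>2 + (sigma s)\<^sup>2 = 1"
    and beta_pos: "\<beta> > 0"
    and meas: "\<eta>t \<in> borel_measurable M" "\<eta>s \<in> borel_measurable M"
    and sq_int: "\<And>i. integrable M (\<lambda>\<omega>. (\<eta>t \<omega> $ i)\<^sup>2)"
                "\<And>i. integrable M (\<lambda>\<omega>. (\<eta>s \<omega> $ i)\<^sup>2)"
    and mean0: "(\<integral>\<omega>. \<eta>t \<omega> \<partial>M) = 0" "(\<integral>\<omega>. \<eta>s \<omega> \<partial>M) = 0"
    and var: "cov_matrix M \<eta>t = \<Sigma>" "cov_matrix M \<eta>s = \<Sigma>"
    and cov: "cross_cov M \<eta>t \<eta>s = \<rho> *\<^sub>R \<Sigma>"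
    and rho: "0 \<le> \<rho>" "\<rho> < 1"
  shows
    "let D = (\<lambda>\<omega>. \<mu>t + \<eta>t \<omega>);
         Ds = (\<lambda>\<omega>. \<mu>s + \<eta>s \<omega>);
         Dtil = (\<lambda>\<omega>. (1 - \<beta>) *\<^sub>R D \<omega> + \<beta> *\<^sub>R Ds \<omega>);
         r = \<mu>s - \<mu>t;
         a = alpha (t - \<Delta>t); sg = sigma (t - \<Delta>t);
         xPS = (\<lambda>\<omega>. a *\<^sub>R D \<omega> + sg *\<^sub>R \<epsilon>);
         xLAMP = (\<lambda>\<omega>. a *\<^sub>R Dtil \<omega> + sg *\<^sub>R \<epsilon>);
         xmu = a *\<^sub>R \<mu>t + sg *\<^sub>R \<epsilon>;
         EPS = (\<integral>\<omega>. (norm (xPS \<omega> - xmu))\<^sup>2 \<partial>M);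
         ELAMP = (\<integral>\<omega>. (norm (xLAMP \<omega> - xmu))\<^sup>2 \<partial>M)
     in EPS = a\<^sup>2 * trace \<Sigma>
      \<and> ELAMP = a\<^sup>2 * ((1 - 2 * \<beta> * (1 - \<beta>) * (1 - \<rho>)) * trace \<Sigma> + \<beta>\<^sup>2 * (norm r)\<^sup>2)
      \<and> (\<beta> * (norm r)\<^sup>2 < 2 * (1 - \<beta>) * (1 - \<rho>) * trace \<Sigma> \<longrightarrow> ELAMP < EPS)"
proof -
  interpret prob_space M by fact
  define a where "a = alpha (t - \<Delta>t)"
  define r where "r = \<mu>s - \<mu>t"
  have "a > 0" using coef_pos(1) by (simp add: a_def)
  have moment: "expectation (\<lambda>\<omega>. (norm (c + p *\<^sub>R \<eta>t \<omega> + q *\<^sub>R \<eta>s \<omega>))\<^sup>2)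
      = (norm c)\<^sup>2 + (p\<^sup>2 + q\<^sup>2 + 2 * p * q * \<rho>) * trace \<Sigma>" for c p q
    using expectation_norm_affine_square[OF meas sq_int mean0] var cov
    by (simp add: trace_scaleR algebra_simps)
  have EPS: "expectation (\<lambda>\<omega>. (norm ((a *\<^sub>R (\<mu>t + \<eta>t \<omega>) + sg *\<^sub>R \<epsilon>) - (a *\<^sub>R \<mu>t + sg *\<^sub>R \<epsilon>)))\<^sup>2)
      = a\<^sup>2 * trace \<Sigma>" for sg
    using moment[of 0 a 0] by (simp add: algebra_simps)
  have "(a *\<^sub>R ((1 - \<beta>) *\<^sub>R (\<mu>t + \<eta>t \<omega>) + \<beta> *\<^sub>R (\<mu>s + \<eta>s \<omega>)) + sg *\<^sub>R \<epsilon>) - (a *\<^sub>R \<mu>t + sg *\<^sub>R \<epsilon>)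
      = (a * \<beta>) *\<^sub>R r + (a * (1 - \<beta>)) *\<^sub>R \<eta>t \<omega> + (a * \<beta>) *\<^sub>R \<eta>s \<omega>" for \<omega> sg
    by (simp add: r_def algebra_simps)
  then have ELAMP: "expectation (\<lambda>\<omega>. (norm ((a *\<^sub>R ((1 - \<beta>) *\<^sub>R (\<mu>t + \<eta>t \<omega>) + \<beta> *\<^sub>R (\<mu>s + \<eta>s \<omega>))
        + sg *\<^sub>R \<epsilon>) - (a *\<^sub>R \<mu>t + sg *\<^sub>R \<epsilon>)))\<^sup>2)
      = a\<^sup>2 * ((1 - 2 * \<beta> * (1 - \<beta>) * (1 - \<rho>)) * trace \<Sigma> + \<beta>\<^sup>2 * (norm r)\<^sup>2)" for sg
    by (simp only: moment) (simp add: power_mult_distrib power2_eq_square algebra_simps)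
  have "(1 - 2 * \<beta> * (1 - \<beta>) * (1 - \<rho>)) * trace \<Sigma> + \<beta>\<^sup>2 * (norm r)\<^sup>2 < trace \<Sigma>"
    if "\<beta> * (norm r)\<^sup>2 < 2 * (1 - \<beta>) * (1 - \<rho>) * trace \<Sigma>"
    using mult_strict_left_mono[OF that beta_pos] by (simp add: power2_eq_square algebra_simps)
  with \<open>a > 0\<close> show ?thesis
    unfolding Let_def a_def[symmetric] r_def[symmetric] EPS ELAMP by simp
qed

end
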